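(* Let $\mathcal T$ be a text, let $\alpha$ be right-maximal in $\mathcal T$, and let $\mathtt{st\text{-}lex}[b,e]$ be the range containing the text positions $i\in\mathtt{st\text{-}lex}$ such that $\mathcal T[1,i]$ is suffixed by $\alpha$. Let $C=\{c\in\Sigma: \alpha\cdot c\text{ occurs in }\mathcal T\}$. Then: (a) for $c\in C\setminus\{\min C\}$, if $\mathcal T[j-|\alpha|+1,n]$ is the lexicographically smallest suffix prefixed by $\alpha\cdot c=\mathcal T[j-|\alpha|+1,j+1]$, then $j\in\mathtt{st\text{-}lex}[b,e]$; (b) for $c\in C\setminus\{\max C\}$, if $\mathcal T[j-|\alpha|+1,n]$ is the lexicographically largest suffix prefixed by $\alpha\cdot c=\mathcal T[j-|\alpha|+1,j+1]$, then $j\in\mathtt{st\text{-}lex}[b,e]$.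
   Context: A text is a string $\mathcal T\in\Sigma^n$ over an integer alphabet whose last symbol $\mathcal T[n]=\$$ occurs only there and is smallest. A substring $\alpha$ is right-maximal if it is a suffix of $\mathcal T$ or there exist distinct $a,b$ with $\alpha a$, $\alpha b$ substrings of $\mathcal T$. $\mathrm{ISA}[i]$ is the lexicographic rank of suffix $\mathcal T[i,n]$. For $i\ne j$, $\mathrm{rlce}(i,j)$ is the length of the longest common prefix of $\mathcal T[i,n]$ and $\mathcal T[j,n]$. For a permutation $\pi$, $\mathrm{LPF}_\pi[i]=0$ if $\pi(i)=1$, else $\mathrm{LPF}_\pi[i]=\max_{\pi(j)<\pi(i)}\mathrm{rlce}(j,i)$, and $\mathrm{PDA}_\pi=\{i+\mathrm{LPF}_\pi[i]:i\in[n]\}$. Let $\mathtt{st\text{-}lex}^-=\mathrm{PDA}_\pi$ for $\pi(i)=\mathrm{ISA}[i]$ and $\mathtt{st\text{-}lex}^+=\mathrm{PDA}_{\bar\pi}$ for $\bar\pi(i)=n-\mathrm{ISA}[i]+1$. The array $\mathtt{st\text{-}lex}$ lists the set $\{i-1: i\in\mathtt{st\text{-}lex}^-\cup\mathtt{st\text{-}lex}^+\cup\{n+1\}\}$ sorted colexicographically by the prefixes $\mathcal T[1,j]$ ($\mathcal T[1,0]$ being empty). *)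

theory Defs
  imports Main "HOL-Library.Sublist" "HOL-Library.List_Lexorder"
begin

text \<open>Texts are lists of naturals; positions are 1-based. T[i] = T ! (i-1).\<close>

definition is_text :: "nat list \<Rightarrow> bool" where
  "is_text T \<longleftrightarrow> T \<noteq> [] \<and> (\<forall>i < length T - 1. last T < T ! i)"

definition suf :: "nat list \<Rightarrow> nat \<Rightarrow> nat list" where
  "suf T i = drop (i - 1) T"

definition right_maximal :: "nat list \<Rightarrow> nat list \<Rightarrow> bool" where
  "right_maximal T \<alpha> \<longleftrightarrow> suffix \<alpha> T \<or>
     (\<exists>a b. a \<noteq> b \<and> sublist (\<alpha> @ [a]) T \<and> sublist (\<alpha> @ [b]) T)"

definition ISA :: "nat list \<Rightarrow> nat \<Rightarrow> nat" where
  "ISA T i = card {j \<in> {1..length T}. suf T j < suf T i} + 1"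

definition rlce :: "nat list \<Rightarrow> nat \<Rightarrow> nat \<Rightarrow> nat" where
  "rlce T i j = length (longest_common_prefix (suf T i) (suf T j))"

definition LPF :: "nat list \<Rightarrow> (nat \<Rightarrow> nat) \<Rightarrow> nat \<Rightarrow> nat" where
  "LPF T \<pi> i = (if \<pi> i = 1 then 0
     else Max {rlce T j i | j. j \<in> {1..length T} \<and> \<pi> j < \<pi> i})"

definition PDA :: "nat list \<Rightarrow> (nat \<Rightarrow> nat) \<Rightarrow> nat set" where
  "PDA T \<pi> = {i + LPF T \<pi> i | i. i \<in> {1..length T}}"

definition stlex_minus :: "nat list \<Rightarrow> nat set" where
  "stlex_minus T = PDA T (ISA T)"

definition stlex_plus :: "nat list \<Rightarrow> nat set" where
  "stlex_plus T = PDA T (\<lambda>i. length T - ISA T i + 1)"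

definition stlex_set :: "nat list \<Rightarrow> nat set" where
  "stlex_set T = (\<lambda>i. i - 1) ` (stlex_minus T \<union> stlex_plus T \<union> {length T + 1})"

text \<open>The range st-lex[b,e] of positions i in st-lex such that T[1,i] is suffixed by alpha
  (contiguous in the colexicographically sorted array; we represent it by its set of entries).\<close>
definition stlex_range :: "nat list \<Rightarrow> nat list \<Rightarrow> nat set" where
  "stlex_range T \<alpha> = {i \<in> stlex_set T. suffix \<alpha> (take i T)}"

definition right_ext :: "nat list \<Rightarrow> nat list \<Rightarrow> nat set" where
  "right_ext T \<alpha> = {c. sublist (\<alpha> @ [c]) T}"

end

theory Submission
  imports Defs
begin

text \<open>Let \<open>i\<close> be the start of the lexicographically smallest suffix prefixed by \<open>\<alpha>c\<close>, with
  \<open>c \<noteq> min C\<close>. Every suffix of smaller rank lacks the prefix \<open>\<alpha>c\<close>, so it shares at most \<open>|\<alpha>|\<close>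
  symbols with suffix \<open>i\<close>; and a suffix prefixed by \<open>\<alpha>\<cdot>min C\<close> has smaller rank and shares exactly
  \<open>|\<alpha>|\<close> symbols. Hence \<open>LPF[i] = |\<alpha>|\<close> for the order \<open>ISA\<close>, and \<open>i + |\<alpha>| = j + 1\<close> lies in
  \<open>st-lex\<^sup>-\<close>. The largest suffix and \<open>max C\<close> give the same for the reversed order and \<open>st-lex\<^sup>+\<close>.\<close>

lemma length_longest_common_prefix_append_Cons:
  "a \<noteq> b \<Longrightarrow> length (longest_common_prefix (p @ a # xs) (p @ b # ys)) = length p"
  by (induction p) auto

lemma prefix_if_le_length_longest_common_prefix:
  assumes "prefix p ys" and "length p \<le> length (longest_common_prefix xs ys)"
  shows "prefix p xs"
proof -
  have "prefix p (longest_common_prefix xs ys)"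
    using assms longest_common_prefix_prefix2 prefix_length_prefix by blast
  then show ?thesis
    using longest_common_prefix_prefix1 prefix_order.trans by blast
qed

lemma append_Cons_less_append_Cons_iff:
  "a \<noteq> b \<Longrightarrow> p @ a # xs < p @ b # ys \<longleftrightarrow> a < (b :: 'a :: linorder)"
  by (induction p) auto

lemma ISA_less_iff:
  assumes "i \<in> {1..length T}" "k \<in> {1..length T}"
  shows "ISA T k < ISA T i \<longleftrightarrow> suf T k < suf T i"
proof
  assume "suf T k < suf T i"
  then have "{l \<in> {1..length T}. suf T l < suf T k} \<subset> {l \<in> {1..length T}. suf T l < suf T i}"
    using assms by (auto intro: less_trans)
  then show "ISA T k < ISA T i"
    unfolding ISA_def by (simp add: psubset_card_mono)
next
  assume "ISA T k < ISA T i"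
  moreover have "ISA T i \<le> ISA T k" if "suf T i \<le> suf T k"
  proof -
    have "{l \<in> {1..length T}. suf T l < suf T i} \<subseteq> {l \<in> {1..length T}. suf T l < suf T k}"
      using that by (auto intro: less_le_trans)
    then show ?thesis
      unfolding ISA_def by (simp add: card_mono)
  qed
  ultimately show "suf T k < suf T i"
    by fastforce
qed

lemma ISA_le_length:
  assumes "i \<in> {1..length T}"
  shows "ISA T i \<le> length T"
proof -
  have "card {l \<in> {1..length T}. suf T l < suf T i} \<le> card ({1..length T} - {i})"
    by (intro card_mono) auto
  with assms show ?thesis
    unfolding ISA_def by (simp; linarith)
qed

lemma reversed_ISA_less_iff:
  assumes "i \<in> {1..length T}" "k \<in> {1..length T}"
  shows "length T - ISA T k + 1 < length T - ISA T i + 1 \<longleftrightarrow> suf T i < suf T k"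
  using ISA_less_iff[OF assms(2,1)] ISA_le_length[OF assms(1)] ISA_le_length[OF assms(2)]
  by linarith

lemma LPF_eq_length_if_no_preceding_occurrence:
  assumes "\<forall>k. 1 \<le> \<pi> k"
    and i: "prefix (\<alpha> @ [c]) (suf T i)"
    and q: "q \<in> {1..length T}" "\<pi> q < \<pi> i" "prefix (\<alpha> @ [d]) (suf T q)" "d \<noteq> c"
    and no_preceding: "\<forall>k \<in> {1..length T}. \<pi> k < \<pi> i \<longrightarrow> \<not> prefix (\<alpha> @ [c]) (suf T k)"
  shows "LPF T \<pi> i = length \<alpha>"
proof -
  let ?S = "{rlce T k i | k. k \<in> {1..length T} \<and> \<pi> k < \<pi> i}"
  have "\<pi> i \<noteq> 1"
    using assms(1) q(2) by (metis not_less)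
  have "rlce T q i = length \<alpha>"
    using i q(3,4) length_longest_common_prefix_append_Cons
    by (fastforce simp: rlce_def prefix_def)
  then have "length \<alpha> \<in> ?S"
    using q(1,2) by force
  moreover have "rlce T k i \<le> length \<alpha>" if "k \<in> {1..length T}" "\<pi> k < \<pi> i" for k
    using no_preceding that prefix_if_le_length_longest_common_prefix[OF i, of "suf T k"]
    by (fastforce simp: rlce_def)
  ultimately have "Max ?S = length \<alpha>"
    by (intro Max_eqI) auto
  with \<open>\<pi> i \<noteq> 1\<close> show ?thesis
    unfolding LPF_def by simp
qed

lemma finite_right_ext: "finite (right_ext T \<alpha>)"
  by (rule finite_subset[of _ "set T"]) (auto simp: right_ext_def sublist_def)

lemma right_ext_occurrence:
  assumes "c \<in> right_ext T \<alpha>"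
  obtains q where "q \<in> {1..length T}" "prefix (\<alpha> @ [c]) (suf T q)"
proof -
  obtain p s where "T = p @ (\<alpha> @ [c]) @ s"
    using assms by (auto simp: right_ext_def sublist_def)
  then show ?thesis
    by (intro that[of "length p + 1"]) (auto simp: suf_def)
qed

lemma smallest_occurrence_in_stlex_minus:
  assumes i: "i \<in> {1..length T}" "prefix (\<alpha> @ [c]) (suf T i)"
    and smallest: "\<forall>q \<in> {1..length T}. prefix (\<alpha> @ [c]) (suf T q) \<longrightarrow> suf T i \<le> suf T q"
    and c: "c \<in> right_ext T \<alpha> - {Min (right_ext T \<alpha>)}"
  shows "i + length \<alpha> \<in> stlex_minus T"
proof -
  let ?d = "Min (right_ext T \<alpha>)"
  have "?d \<in> right_ext T \<alpha>" "?d < c"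
    using c finite_right_ext by (auto intro: Min_in simp: order_le_neq_trans)
  then obtain q where q: "q \<in> {1..length T}" "prefix (\<alpha> @ [?d]) (suf T q)"
    by (auto elim: right_ext_occurrence)
  have "suf T q < suf T i"
    using q(2) i(2) \<open>?d < c\<close>
    by (auto simp: prefix_def append_Cons_less_append_Cons_iff)
  then have "ISA T q < ISA T i"
    using ISA_less_iff[OF i(1) q(1)] by simp
  moreover have "\<not> prefix (\<alpha> @ [c]) (suf T k)" if "k \<in> {1..length T}" "ISA T k < ISA T i" for k
    using smallest that ISA_less_iff[OF i(1) that(1)] by (meson leD)
  moreover have "\<forall>k. 1 \<le> ISA T k"
    by (simp add: ISA_def)
  ultimately have "LPF T (ISA T) i = length \<alpha>"
    using q \<open>?d < c\<close> i(2) LPF_eq_length_if_no_preceding_occurrence[of "ISA T" \<alpha> c T i q ?d]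
    by blast
  with i(1) show ?thesis
    unfolding stlex_minus_def PDA_def by force
qed

lemma largest_occurrence_in_stlex_plus:
  assumes i: "i \<in> {1..length T}" "prefix (\<alpha> @ [c]) (suf T i)"
    and largest: "\<forall>q \<in> {1..length T}. prefix (\<alpha> @ [c]) (suf T q) \<longrightarrow> suf T q \<le> suf T i"
    and c: "c \<in> right_ext T \<alpha> - {Max (right_ext T \<alpha>)}"
  shows "i + length \<alpha> \<in> stlex_plus T"
proof -
  let ?d = "Max (right_ext T \<alpha>)"
  let ?\<pi> = "\<lambda>i. length T - ISA T i + 1"
  have "?d \<in> right_ext T \<alpha>" "c < ?d"
    using c finite_right_ext by (auto intro: Max_in simp: order_le_neq_trans)
  then obtain q where q: "q \<in> {1..length T}" "prefix (\<alpha> @ [?d]) (suf T q)"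
    by (auto elim: right_ext_occurrence)
  have "suf T i < suf T q"
    using q(2) i(2) \<open>c < ?d\<close>
    by (auto simp: prefix_def append_Cons_less_append_Cons_iff)
  then have "?\<pi> q < ?\<pi> i"
    using reversed_ISA_less_iff[OF i(1) q(1)] by simp
  moreover have "\<not> prefix (\<alpha> @ [c]) (suf T k)" if "k \<in> {1..length T}" "?\<pi> k < ?\<pi> i" for k
    using largest that reversed_ISA_less_iff[OF i(1) that(1)] by (meson leD)
  moreover have "\<forall>k. 1 \<le> ?\<pi> k"
    by simp
  ultimately have "LPF T ?\<pi> i = length \<alpha>"
    using q \<open>c < ?d\<close> i(2) LPF_eq_length_if_no_preceding_occurrence[of ?\<pi> \<alpha> c T i q ?d]
    by blast
  with i(1) show ?thesis
    unfolding stlex_plus_def PDA_def by force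
qed

lemma occurrence_ending_at:
  assumes "length \<alpha> \<le> j" "j + 1 \<le> length T"
    and occ: "take (length \<alpha> + 1) (drop (j - length \<alpha>) T) = \<alpha> @ [c]"
  shows "j + 1 - length \<alpha> \<in> {1..length T}"
    and "prefix (\<alpha> @ [c]) (suf T (j + 1 - length \<alpha>))"
    and "suffix \<alpha> (take j T)"
proof -
  show "j + 1 - length \<alpha> \<in> {1..length T}"
    using assms by auto
  show "prefix (\<alpha> @ [c]) (suf T (j + 1 - length \<alpha>))"
    using assms(1) occ
    by (metis Suc_diff_le add.commute diff_Suc_1 plus_1_eq_Suc suf_def take_is_prefix)
  have "take j T = take (j - length \<alpha>) T @ take (length \<alpha>) (drop (j - length \<alpha>) T)"
    using assms(1) by (metis le_add_diff_inverse2 take_add)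
  also have "take (length \<alpha>) (drop (j - length \<alpha>) T) = \<alpha>"
    using occ by (metis append_eq_conv_conj le_add1 min.absorb1 take_take)
  finally show "suffix \<alpha> (take j T)"
    by (simp add: suffix_def)
qed

lemma in_stlex_rangeI:
  "j + 1 \<in> stlex_minus T \<union> stlex_plus T \<Longrightarrow> suffix \<alpha> (take j T) \<Longrightarrow> j \<in> stlex_range T \<alpha>"
  unfolding stlex_range_def stlex_set_def by (auto intro!: image_eqI[of _ _ "j + 1"])

theorem corollary26:
  fixes T \<alpha> :: "nat list"
  assumes "is_text T"
    and "right_maximal T \<alpha>"
  shows
   "(\<forall>c j. c \<in> right_ext T \<alpha> - {Min (right_ext T \<alpha>)} \<longrightarrow>
       length \<alpha> \<le> j \<longrightarrow> j + 1 \<le> length T \<longrightarrow>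
       take (length \<alpha> + 1) (drop (j - length \<alpha>) T) = \<alpha> @ [c] \<longrightarrow>
       (\<forall>q \<in> {1..length T}. prefix (\<alpha> @ [c]) (suf T q) \<longrightarrow>
           suf T (j + 1 - length \<alpha>) \<le> suf T q) \<longrightarrow>
       j \<in> stlex_range T \<alpha>)
  \<and> (\<forall>c j. c \<in> right_ext T \<alpha> - {Max (right_ext T \<alpha>)} \<longrightarrow>
       length \<alpha> \<le> j \<longrightarrow> j + 1 \<le> length T \<longrightarrow>
       take (length \<alpha> + 1) (drop (j - length \<alpha>) T) = \<alpha> @ [c] \<longrightarrow>
       (\<forall>q \<in> {1..length T}. prefix (\<alpha> @ [c]) (suf T q) \<longrightarrow>
           suf T q \<le> suf T (j + 1 - length \<alpha>)) \<longrightarrow>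
       j \<in> stlex_range T \<alpha>)"
proof (intro conjI allI impI)
  fix c j
  assume c: "c \<in> right_ext T \<alpha> - {Min (right_ext T \<alpha>)}" and j: "length \<alpha> \<le> j" "j + 1 \<le> length T"
    and occ: "take (length \<alpha> + 1) (drop (j - length \<alpha>) T) = \<alpha> @ [c]"
    and smallest: "\<forall>q \<in> {1..length T}. prefix (\<alpha> @ [c]) (suf T q) \<longrightarrow>
       suf T (j + 1 - length \<alpha>) \<le> suf T q"
  note i = occurrence_ending_at[OF j occ]
  have "j + 1 \<in> stlex_minus T"
    using smallest_occurrence_in_stlex_minus[OF i(1,2) smallest c] j(1) by simp
  with i(3) show "j \<in> stlex_range T \<alpha>"
    by (blast intro: in_stlex_rangeI)
next
  fix c j
  assume c: "c \<in> right_ext T \<alpha> - {Max (right_ext T \<alpha>)}" and j: "length \<alpha> \<le> j" "j + 1 \<le> length T"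
    and occ: "take (length \<alpha> + 1) (drop (j - length \<alpha>) T) = \<alpha> @ [c]"
    and largest: "\<forall>q \<in> {1..length T}. prefix (\<alpha> @ [c]) (suf T q) \<longrightarrow>
       suf T q \<le> suf T (j + 1 - length \<alpha>)"
  note i = occurrence_ending_at[OF j occ]
  have "j + 1 \<in> stlex_plus T"
    using largest_occurrence_in_stlex_plus[OF i(1,2) largest c] j(1) by simp
  with i(3) show "j \<in> stlex_range T \<alpha>"
    by (blast intro: in_stlex_rangeI)
qed

end
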